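(* Let $\mathbb{E}$ be a countable subset of $\mathbb{R}$ with $0\in\mathbb{E}$, and let $\mathcal{V}$ be a closed $\mathbb{E}$-vine over a complete metric space $(X,d)$. Assume that for every $n\ge0$ we have $\mathcal{V}_{(n)}=\overline{\pi_n[\mathcal{V}_{(n+1)}]}$. Then either $\mathcal{V}=\emptyset$ or $\mathcal{V}$ is not well founded.
   Context: For finite $G\subset\mathbb{N}$, $[\mathbb{E},G]=\{f:\mathbb{N}\to\mathbb{E}:\mathrm{supp}(f)\subset G\}$ (so $[\mathbb{E},\emptyset]=\{0\}$). An $\mathbb{E}$-bunch over a set $X$ is an element $\chi=(x_f)_{f\in[\mathbb{E},G]}\in X^{[\mathbb{E},G]}$ for some finite $G\subset\mathbb{N}$. For $\chi=(x_f)_{f\in[\mathbb{E},F]}$ and $\psi=(y_f)_{f\in[\mathbb{E},G]}$ write $\chi\preceq\psi$ if $F$ is an initial segment of $G$ and $y_f=x_f$ for all $f\in[\mathbb{E},F]$. An $\mathbb{E}$-vine over $X$ is a set $\mathcal{V}$ of $\mathbb{E}$-bunches over $X$ such that $\chi\in\mathcal{V}$ and $\psi\preceq\chi$ imply $\psi\in\mathcal{V}$. It is well founded if $(\mathcal{V},\preceq)$ contains no infinite totally ordered subset. For $n\ge0$, $\mathcal{V}_{(n)}=\{(x_f)_{f\in[\mathbb{E},G]}\in\mathcal{V}:|G|=n\}$, a subset of the disjoint union $\bigcup_{G\in[\mathbb{N}]^n}X^{[\mathbb{E},G]}$, each $X^{[\mathbb{E},G]}$ carrying the product topology. $\mathcal{V}$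 is closed if $\mathcal{V}\cap X^{[\mathbb{E},G]}$ is closed in $X^{[\mathbb{E},G]}$ for every finite $G$. For $G\in[\mathbb{N}]^{n+1}$ put $G'=G\setminus\{\max G\}$ and define $\pi_n:\mathcal{V}_{(n+1)}\to\mathcal{V}_{(n)}$ by $\pi_n((x_f)_{f\in[\mathbb{E},G]})=(x_f)_{f\in[\mathbb{E},G']}$. The closure in the hypothesis is taken in $\bigcup_{G\in[\mathbb{N}]^n}X^{[\mathbb{E},G]}$. *)

theory Defs
  imports "HOL-Analysis.Analysis"
begin

definition EG :: "real set \<Rightarrow> nat set \<Rightarrow> (nat \<Rightarrow> real) set" where
  "EG E G = {f. (\<forall>n. f n \<in> E) \<and> (\<forall>n. f n \<noteq> 0 \<longrightarrow> n \<in> G)}"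

text \<open>An E-bunch over X (the type 'a) is a pair (G, x) with G finite and
  x an element of X^[E,G], represented as an extensional function on [E,G].\<close>
type_synonym 'a bunch = "nat set \<times> ((nat \<Rightarrow> real) \<Rightarrow> 'a)"

definition bunches :: "real set \<Rightarrow> 'a bunch set" where
  "bunches E = {(G, x). finite G \<and> x \<in> extensional (EG E G)}"

definition initial_segment :: "nat set \<Rightarrow> nat set \<Rightarrow> bool" where
  "initial_segment F G \<longleftrightarrow> F \<subseteq> G \<and> (\<forall>a\<in>F. \<forall>b\<in>G. b < a \<longrightarrow> b \<in> F)"

definition bunch_le :: "real set \<Rightarrow> 'a bunch \<Rightarrow> 'a bunch \<Rightarrow> bool" where
  "bunch_le E c d \<longleftrightarrow> initial_segment (fst c) (fst d) \<and>
     (\<forall>f\<in>EG E (fst c). snd d f = snd c f)"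

definition is_vine :: "real set \<Rightarrow> 'a bunch set \<Rightarrow> bool" where
  "is_vine E V \<longleftrightarrow> V \<subseteq> bunches E \<and>
     (\<forall>c\<in>V. \<forall>d\<in>bunches E. bunch_le E d c \<longrightarrow> d \<in> V)"

definition vine_well_founded :: "real set \<Rightarrow> 'a bunch set \<Rightarrow> bool" where
  "vine_well_founded E V \<longleftrightarrow>
     \<not> (\<exists>C\<subseteq>V. infinite C \<and> (\<forall>a\<in>C. \<forall>b\<in>C. bunch_le E a b \<or> bunch_le E b a))"

definition bunch_topology :: "real set \<Rightarrow> nat set \<Rightarrow> ((nat \<Rightarrow> real) \<Rightarrow> 'a::topological_space) topology" where
  "bunch_topology E G = product_topology (\<lambda>_. euclidean) (EG E G)"

definition vine_closed :: "real set \<Rightarrow> 'a::topological_space bunch set \<Rightarrow> bool" where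
  "vine_closed E V \<longleftrightarrow> (\<forall>G. finite G \<longrightarrow> closedin (bunch_topology E G) {x. (G, x) \<in> V})"

definition level_topology :: "real set \<Rightarrow> nat \<Rightarrow> 'a::topological_space bunch topology" where
  "level_topology E n = sum_topology (bunch_topology E) {G. finite G \<and> card G = n}"

definition level :: "'a bunch set \<Rightarrow> nat \<Rightarrow> 'a bunch set" where
  "level V n = {c\<in>V. card (fst c) = n}"

definition vine_proj :: "real set \<Rightarrow> 'a bunch \<Rightarrow> 'a bunch" where
  "vine_proj E c = (let G' = fst c - {Max (fst c)} in (G', restrict (snd c) (EG E G')))"

end

theory Submission
  imports Defs
begin

text \<open>Enumerate the countably many finitely supported \<open>f\<close> in the index sets [E,G], G finite.
  Starting from a bunch on level 0, the closure hypothesis lets us extend a bunch on level n to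
  one on level n+1 whose values at the first n enumerated points move by less than \<open>2^-n\<close>.
  At every point the values then form a Cauchy sequence; by completeness they converge, and
  since V is closed the limits restricted to the successive index sets form an infinite
  \<open>\<preceq>\<close>-chain in V.\<close>

lemma Cauchy_if_dist_Suc_le_summable:
  fixes a :: "nat \<Rightarrow> 'b::metric_space"
  assumes "summable b" and "\<And>n. n \<ge> N \<Longrightarrow> dist (a n) (a (Suc n)) \<le> b n"
  shows "Cauchy a"
proof -
  have dist_le_sum: "dist (a m) (a (m + k)) \<le> sum b {m..<m + k}" if "m \<ge> N" for m k
  proof (induction k)
    case (Suc k)
    have "dist (a m) (a (m + Suc k)) \<le> dist (a m) (a (m + k)) + dist (a (m + k)) (a (Suc (m + k)))"
      by (simp add: dist_triangle)
    also have "\<dots> \<le> sum b {m..<m + k} + b (m + k)"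
      using Suc assms(2)[of "m + k"] that by simp
    finally show ?case by simp
  qed simp
  show ?thesis
    unfolding Cauchy_altdef2
  proof (intro allI impI)
    fix e :: real assume "e > 0"
    then obtain M where M: "\<And>m n. m \<ge> M \<Longrightarrow> norm (sum b {m..<n}) < e"
      using assms(1) unfolding summable_Cauchy by blast
    have "dist (a n) (a (max M N)) < e" if "n \<ge> max M N" for n
      using dist_le_sum[of "max M N" "n - max M N"] M[of "max M N" n] that
      by (simp add: dist_commute)
    then show "\<exists>N. \<forall>n\<ge>N. dist (a n) (a N) < e" by blast
  qed
qed

lemma convergent_if_enumerated_near:
  fixes x :: "nat \<Rightarrow> 'i \<Rightarrow> 'a::complete_space" and e :: "nat \<Rightarrow> 'i"
  assumes mono: "\<And>k n. k \<le> n \<Longrightarrow> A k \<subseteq> A n"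
    and near: "\<And>n j. j \<le> n \<Longrightarrow> e j \<in> A n \<Longrightarrow> dist (x (Suc n) (e j)) (x n (e j)) < (1/2)^n"
    and "e j \<in> A k"
  shows "convergent (\<lambda>n. x n (e j))"
proof -
  have "Cauchy (\<lambda>n. x n (e j))"
  proof (rule Cauchy_if_dist_Suc_le_summable[OF summable_geometric, of "1/2" "max j k"])
    fix n assume "max j k \<le> n"
    then show "dist (x n (e j)) (x (Suc n) (e j)) \<le> (1/2)^n"
      using near[of j n] mono[of k n] assms(3) by (auto simp: dist_commute)
  qed simp
  then show ?thesis by (rule Cauchy_convergent)
qed

lemma openin_product_topology_finite_balls:
  fixes a :: "'i \<Rightarrow> 'b::metric_space"
  assumes "finite J" "J \<subseteq> I"
  shows "openin (product_topology (\<lambda>_. euclidean) I)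
     {z \<in> topspace (product_topology (\<lambda>_. euclidean) I). \<forall>j\<in>J. dist (z j) (a j) < r}"
proof -
  define P where "P = (product_topology (\<lambda>_. euclidean) I :: ('i \<Rightarrow> 'b) topology)"
  have "openin P {z \<in> topspace P. z j \<in> ball (a j) r}" if "j \<in> J" for j
    unfolding P_def
    by (rule openin_continuous_map_preimage[OF continuous_map_product_projection])
      (use assms that in auto)
  then have "openin P ((\<Inter>j\<in>J. {z \<in> topspace P. z j \<in> ball (a j) r}) \<inter> topspace P)"
    by (rule openin_INT[OF assms(1)])
  moreover have "(\<Inter>j\<in>J. {z \<in> topspace P. z j \<in> ball (a j) r}) \<inter> topspace P =
      {z \<in> topspace P. \<forall>j\<in>J. dist (z j) (a j) < r}"
    by (auto simp: dist_commute)
  ultimately show ?thesis unfolding P_def by simp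
qed

lemma initial_segment_refl: "initial_segment F F"
  unfolding initial_segment_def by blast

lemma initial_segment_trans:
  "initial_segment F G \<Longrightarrow> initial_segment G H \<Longrightarrow> initial_segment F H"
  unfolding initial_segment_def by blast

lemma initial_segment_Diff_Max:
  assumes "finite G" "G \<noteq> {}"
  shows "initial_segment (G - {Max G}) G"
  unfolding initial_segment_def using assms Max_ge by fastforce

lemma initial_segment_chain:
  assumes "\<And>n. initial_segment (A n) (A (Suc n))" and "k \<le> m"
  shows "initial_segment (A k) (A m)"
  using assms(2)
proof (induction m rule: dec_induct)
  case base then show ?case by (rule initial_segment_refl)
next
  case (step m) then show ?case using assms(1) initial_segment_trans by blast
qed

lemma initial_segment_chain_Diff_Max:
  assumes "\<And>n. card (G n) = n" and "\<And>n. G (Suc n) - {Max (G (Suc n))} = G n"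
    and "k \<le> m"
  shows "initial_segment (G k) (G m)"
proof (rule initial_segment_chain[OF _ assms(3)])
  fix n
  have "finite (G (Suc n))" "G (Suc n) \<noteq> {}"
    using assms(1)[of "Suc n"] by (auto intro: card_ge_0_finite)
  then show "initial_segment (G n) (G (Suc n))"
    using initial_segment_Diff_Max assms(2) by metis
qed

lemma EG_mono: "F \<subseteq> G \<Longrightarrow> EG E F \<subseteq> EG E G"
  unfolding EG_def by blast

lemma zero_in_EG: "0 \<in> E \<Longrightarrow> (\<lambda>_. 0) \<in> EG E G"
  unfolding EG_def by simp

lemma countable_EG:
  assumes "countable E" "finite G"
  shows "countable (EG E G)"
proof -
  have "EG E G \<subseteq> (\<lambda>g n. if n \<in> G then g n else 0) ` Pi\<^sub>E G (\<lambda>_. E)"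
  proof
    fix f assume f: "f \<in> EG E G"
    then have "f = (\<lambda>n. if n \<in> G then restrict f G n else 0)"
      unfolding EG_def by (auto simp: fun_eq_iff)
    moreover have "restrict f G \<in> Pi\<^sub>E G (\<lambda>_. E)" using f unfolding EG_def by auto
    ultimately show "f \<in> (\<lambda>g n. if n \<in> G then g n else 0) ` Pi\<^sub>E G (\<lambda>_. E)" by blast
  qed
  moreover have "countable (Pi\<^sub>E G (\<lambda>_. E))"
    by (rule countable_PiE) (use assms in auto)
  ultimately show ?thesis by (meson countable_image countable_subset)
qed

lemma enumeration_of_finite_support_EG:
  assumes "countable E" "0 \<in> E"
  obtains e :: "nat \<Rightarrow> nat \<Rightarrow> real" where "\<And>G. finite G \<Longrightarrow> EG E G \<subseteq> range e"
proof -
  let ?U = "\<Union>G\<in>{G. finite G}. EG E G"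
  have "countable ?U"
    using assms(1) by (auto intro: countable_UN countable_EG countable_Collect_finite)
  moreover have "?U \<noteq> {}"
    using zero_in_EG[OF assms(2), of "{}"] by blast
  ultimately have "range (from_nat_into ?U) = ?U" by (intro range_from_nat_into)
  then show ?thesis by (intro that[of "from_nat_into ?U"]) blast
qed

lemma vine_restrict_mem:
  assumes "is_vine E V" "c \<in> V" "finite F" "initial_segment F (fst c)"
  shows "(F, restrict (snd c) (EG E F)) \<in> V"
proof -
  have "(F, restrict (snd c) (EG E F)) \<in> bunches E"
    using assms(3) unfolding bunches_def by simp
  moreover have "bunch_le E (F, restrict (snd c) (EG E F)) c"
    using assms(4) unfolding bunch_le_def by simp
  ultimately show ?thesis using assms(1,2) unfolding is_vine_def by blast
qed

lemma vine_level_0_nonempty: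
  assumes "is_vine E V" "V \<noteq> {}"
  shows "level V 0 \<noteq> {}"
proof -
  obtain c where "c \<in> V" using assms(2) by blast
  then have "({}, restrict (snd c) (EG E {})) \<in> V"
    by (rule vine_restrict_mem[OF assms(1)]) (auto simp: initial_segment_def)
  then show ?thesis unfolding level_def by force
qed

text \<open>A point of the closure is approached inside the basic open set that fixes the index set
  \<open>G\<close> and controls finitely many coordinates.\<close>

lemma vine_level_extension_near:
  fixes V :: "'a::metric_space bunch set"
  assumes "V \<subseteq> bunches E"
    and "level V n \<subseteq> level_topology E n closure_of (vine_proj E ` level V (Suc n))"
    and "(G, x) \<in> level V n" and "finite J" "J \<subseteq> EG E G" and "r > 0"
  shows "\<exists>H z. (H, z) \<in> level V (Suc n) \<and> H - {Max H} = G \<and> (\<forall>f\<in>J. dist (z f) (x f) < r)"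
proof -
  have "finite G" "card G = n" and x_ext: "x \<in> extensional (EG E G)"
    using assms(1,3) unfolding level_def bunches_def by auto
  define S where "S = {z \<in> topspace (bunch_topology E G). \<forall>f\<in>J. dist (z f) (x f) < r}"
  have S_open: "openin (bunch_topology E G) S"
    unfolding S_def bunch_topology_def by (rule openin_product_topology_finite_balls[OF assms(4,5)])
  then have "openin (bunch_topology E H) {z. H = G \<and> z \<in> S}" for H
    by (cases "H = G") auto
  then have S_open_level: "openin (level_topology E n) ({G} \<times> S)"
    using \<open>finite G\<close> \<open>card G = n\<close> openin_subset[OF S_open]
    unfolding level_topology_def openin_sum_topology by auto
  have "(G, x) \<in> {G} \<times> S"
    using x_ext \<open>r > 0\<close> unfolding S_def bunch_topology_def by (auto simp: PiE_def)
  moreover have "(G, x) \<in> level_topology E n closure_of (vine_proj E ` level V (Suc n))"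
    using assms(2,3) by (rule subsetD)
  ultimately have "\<exists>y. y \<in> vine_proj E ` level V (Suc n) \<and> y \<in> {G} \<times> S"
    using S_open_level unfolding in_closure_of by (elim conjE allE impE) (rule conjI)
  then obtain c where c: "c \<in> level V (Suc n)" "vine_proj E c \<in> {G} \<times> S"
    by (elim exE conjE imageE) (simp only:)
  then have "fst c - {Max (fst c)} = G" and c_S: "restrict (snd c) (EG E G) \<in> S"
    unfolding vine_proj_def Let_def by auto
  moreover have "\<forall>f\<in>J. dist (snd c f) (x f) < r"
    using c_S assms(5) unfolding S_def by (auto simp: subset_iff)
  ultimately show ?thesis using c(1) by (intro exI[of _ "fst c"] exI[of _ "snd c"]) simp
qed

lemma vine_approximating_sequence:
  fixes V :: "'a::metric_space bunch set" and e :: "nat \<Rightarrow> nat \<Rightarrow> real"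
  assumes "V \<subseteq> bunches E" and "level V 0 \<noteq> {}"
    and "\<And>n. level V n \<subseteq> level_topology E n closure_of (vine_proj E ` level V (Suc n))"
  obtains G x where "\<And>n. (G n, x n) \<in> level V n"
    and "\<And>n. G (Suc n) - {Max (G (Suc n))} = G n"
    and "\<And>n j. j \<le> n \<Longrightarrow> e j \<in> EG E (G n) \<Longrightarrow> dist (x (Suc n) (e j)) (x n (e j)) < (1/2::real)^n"
proof -
  define extends_near :: "nat \<Rightarrow> 'a bunch \<Rightarrow> 'a bunch \<Rightarrow> bool" where
    "extends_near n c c' \<longleftrightarrow> c' \<in> level V (Suc n) \<and> fst c' - {Max (fst c')} = fst c \<and>
        (\<forall>j\<le>n. e j \<in> EG E (fst c) \<longrightarrow> dist (snd c' (e j)) (snd c (e j)) < (1/2::real)^n)" for n c c'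
  have "\<exists>c'. extends_near n c c'" if c: "c \<in> level V n" for n c
  proof -
    let ?J = "e ` {j. j \<le> n \<and> e j \<in> EG E (fst c)}"
    have "\<exists>H z. (H, z) \<in> level V (Suc n) \<and> H - {Max H} = fst c \<and>
        (\<forall>f\<in>?J. dist (z f) (snd c f) < (1/2::real)^n)"
      by (rule vine_level_extension_near[OF assms(1,3)]) (use c in \<open>auto\<close>)
    then obtain H z where "(H, z) \<in> level V (Suc n)" "H - {Max H} = fst c"
        "\<forall>f\<in>?J. dist (z f) (snd c f) < (1/2::real)^n"
      by blast
    then have "extends_near n c (H, z)" unfolding extends_near_def by auto
    then show ?thesis ..
  qed
  then have "\<forall>n c. \<exists>c'. c \<in> level V n \<longrightarrow> extends_near n c c'" by blast
  then obtain next_bunch where next_bunch: "\<And>n c. c \<in> level V n \<Longrightarrow> extends_near n c (next_bunch n c)"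
    by metis
  obtain c0 where c0: "c0 \<in> level V 0" using assms(2) by blast
  define c where "c = rec_nat c0 next_bunch"
  have c_Suc: "c (Suc n) = next_bunch n (c n)" for n
    unfolding c_def by simp
  have c_level: "c n \<in> level V n" for n
  proof (induction n)
    case 0 then show ?case using c0 by (simp add: c_def)
  next
    case (Suc n) then show ?case using next_bunch c_Suc unfolding extends_near_def by simp
  qed
  have c_extends: "extends_near n (c n) (c (Suc n))" for n
    using next_bunch[OF c_level] c_Suc by simp
  show ?thesis
    by (rule that[of "\<lambda>n. fst (c n)" "\<lambda>n. snd (c n)"]) (use c_level c_extends in \<open>auto simp: extends_near_def\<close>)
qed

lemma not_vine_well_founded_if_chain:
  fixes b :: "nat \<Rightarrow> 'a bunch"
  assumes "range b \<subseteq> V" "inj b" "\<And>k m. k \<le> m \<Longrightarrow> bunch_le E (b k) (b m)"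
  shows "\<not> vine_well_founded E V"
proof -
  have "bunch_le E p q \<or> bunch_le E q p" if pq: "p \<in> range b" "q \<in> range b" for p q
  proof -
    obtain k m where "p = b k" "q = b m" using pq by blast
    then show ?thesis using assms(3) nat_le_linear[of k m] by blast
  qed
  moreover have "infinite (range b)" using assms(2) by (rule range_inj_infinite)
  ultimately show ?thesis
    using assms(1) unfolding vine_well_founded_def by blast
qed

lemma not_vine_well_founded_if_pointwise_limit:
  fixes x :: "nat \<Rightarrow> (nat \<Rightarrow> real) \<Rightarrow> 'a::metric_space"
  assumes vine: "is_vine E V" and closed: "vine_closed E V"
    and mem: "\<And>n. (G n, x n) \<in> V" and card: "\<And>n. card (G n) = n"
    and step: "\<And>n. G (Suc n) - {Max (G (Suc n))} = G n"
    and conv: "\<And>k f. f \<in> EG E (G k) \<Longrightarrow> convergent (\<lambda>n. x n f)"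
  shows "\<not> vine_well_founded E V"
proof -
  define y where "y f = lim (\<lambda>n. x n f)" for f
  have lim: "(\<lambda>n. x n f) \<longlonglongrightarrow> y f" if "f \<in> EG E (G k)" for k f
    using conv[OF that] unfolding y_def by (rule convergent_LIMSEQ_iff[THEN iffD1])
  have "(G n, x n) \<in> bunches E" for n
    using vine mem unfolding is_vine_def by blast
  then have fin: "finite (G n)" for n
    unfolding bunches_def by simp
  have init: "initial_segment (G k) (G m)" if "k \<le> m" for k m
    using initial_segment_chain_Diff_Max[OF card step that] .
  define b where "b k = (G k, restrict y (EG E (G k)))" for k
  have "b k \<in> V" for k
  proof -
    have "limitin (bunch_topology E (G k)) (\<lambda>n. restrict (x n) (EG E (G k)))
        (restrict y (EG E (G k))) sequentially"
      unfolding bunch_topology_def limitin_componentwise using lim by (auto simp: PiE_def)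
    moreover have "closedin (bunch_topology E (G k)) {z. (G k, z) \<in> V}"
      using closed fin unfolding vine_closed_def by blast
    moreover have "eventually (\<lambda>n. restrict (x n) (EG E (G k)) \<in> {z. (G k, z) \<in> V}) sequentially"
      unfolding eventually_sequentially
      using vine_restrict_mem[OF vine mem fin] init by (intro exI[of _ k]) simp
    ultimately have "restrict y (EG E (G k)) \<in> {z. (G k, z) \<in> V}"
      by (rule limitin_closedin) simp
    then show ?thesis unfolding b_def by simp
  qed
  moreover have "inj b"
    by (rule injI) (metis b_def card fst_conv)
  moreover have "bunch_le E (b k) (b m)" if "k \<le> m" for k m
    using init[OF that] EG_mono[of "G k" "G m" E] unfolding bunch_le_def b_def initial_segment_def
    by auto
  ultimately show ?thesis by (intro not_vine_well_founded_if_chain) auto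
qed

theorem lemma3p1:
  fixes E :: "real set" and V :: "'a::complete_space bunch set"
  assumes "countable E" and "0 \<in> E"
    and "is_vine E V" and "vine_closed E V"
    and "\<forall>n. level V n = level_topology E n closure_of (vine_proj E ` level V (Suc n))"
  shows "V = {} \<or> \<not> vine_well_founded E V"
proof (cases "V = {}")
  case False
  obtain e :: "nat \<Rightarrow> nat \<Rightarrow> real" where e: "\<And>G. finite G \<Longrightarrow> EG E G \<subseteq> range e"
    using enumeration_of_finite_support_EG[OF assms(1,2)] by blast
  have bunches: "V \<subseteq> bunches E" using assms(3) unfolding is_vine_def by blast
  have closure: "level V n \<subseteq> level_topology E n closure_of (vine_proj E ` level V (Suc n))" for n
    using assms(5)[rule_format, of n] by (rule eq_refl)
  obtain G x where lev: "\<And>n. (G n, x n) \<in> level V n"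
    and step: "\<And>n. G (Suc n) - {Max (G (Suc n))} = G n"
    and near: "\<And>n j. j \<le> n \<Longrightarrow> e j \<in> EG E (G n) \<Longrightarrow> dist (x (Suc n) (e j)) (x n (e j)) < (1/2)^n"
    using vine_approximating_sequence[OF bunches vine_level_0_nonempty[OF assms(3) False] closure]
    by blast
  have mem: "(G n, x n) \<in> V" and card: "card (G n) = n" for n
    using lev[of n] unfolding level_def by auto
  have EG_G_mono: "EG E (G k) \<subseteq> EG E (G n)" if "k \<le> n" for k n
    by (rule EG_mono)
      (use initial_segment_chain_Diff_Max[OF card step that] in \<open>simp add: initial_segment_def\<close>)
  have "convergent (\<lambda>n. x n f)" if f: "f \<in> EG E (G k)" for k f
  proof -
    have "(G k, x k) \<in> bunches E" using mem bunches by blast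
    then have "finite (G k)" unfolding bunches_def by simp
    then obtain j where j: "f = e j" using e f by blast
    show ?thesis
      unfolding j by (rule convergent_if_enumerated_near[where A = "\<lambda>k. EG E (G k)"])
        (use EG_G_mono near f j in auto)
  qed
  then have "\<not> vine_well_founded E V"
    by (rule not_vine_well_founded_if_pointwise_limit[OF assms(3,4) mem card step])
  then show ?thesis ..
qed simp

end
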